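(* Let $(\pi,I)$ be an optimal deterministic Markovian policy, with value function $\Pi(\delta)$. For any $\varepsilon>0$ there exists a continuous randomized Markovian policy $(\pi_c,I_c)$ with expected payoff function $\widehat\Pi(\delta)$ such that $\|\Pi-\widehat\Pi\|_1<\varepsilon$, where $\|\cdot\|_1$ is the $L^1$ norm on $[0,1]$.
   Context: A decision maker chooses an action from a finite set $\mathcal{A}$ with reward $\mathcal{R}(a,\Theta)$, $\Theta\in\{\theta_0,\theta_1\}$ unknown; $G(\delta)=\max_{a\in\mathcal{A}}\{\delta\mathcal{R}(a,\theta_0)+(1-\delta)\mathcal{R}(a,\theta_1)\}$ where $\delta$ is the belief that $\Theta=\theta_0$. There is a finite set $\mathcal{E}$ of experiments, each $E$ with finite outcome set $\mathcal{X}_E$, outcome probabilities $Q(x,E,\theta)$ and likelihood ratio $\mathcal{L}(x,E)=Q(x,E,\theta_1)/Q(x,E,\theta_0)$; every experiment is informative. Experiments are performed at the jumps of a Poisson process of rate $\Lambda>0$; after outcome $x$ of experiment $E$ the belief jumps from $\delta$ to $\delta/(\delta+(1-\delta)\mathcal{L}(x,E))$. Discount rate $r>0$. A deterministic Markovian policy is a pair $(\pi,I)$ with $\pi:[0,1]\to\mathcal{E}$ measurable and $I\subseteq[0,1]$ Borel: while the belief $\delta\notin I$ the DM uses experiment $\pi(\delta)$; at $\tau=\inf\{t>0:\delta_t\in I\}$ she stops and collects $G(\delta_\tau)$; its expected payoff from initial belief $\delta$ is $\mathbb{E}_\delta[e^{-r\tau}G(\delta_\tau)]$. It is optimal if its payoff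 equals the optimal value $\Pi(\delta)=\sup\mathbb{E}_\delta[e^{-r\tau}G(\delta_\tau)]$ for every $\delta$. A continuous randomized Markovian policy is a pair $(\pi_c,I_c)$ with $I_c$ Borel and $\pi_c:[0,1]\to\Delta(\mathcal{E})$ such that $\delta\mapsto\pi_c(\delta,E)$ is continuous for every $E$: for $\delta\notin I_c$ experiment $E$ is used with probability $\pi_c(\delta,E)$, and the DM stops upon entering $I_c$, collecting $G$ at the stopping belief. *)

theory Defs
  imports "HOL-Analysis.Analysis"
begin

datatype theta = Theta0 | Theta1

text \<open>Value of stopping at belief d (belief that Theta = Theta0).\<close>
definition Gval :: "'a set \<Rightarrow> ('a \<Rightarrow> theta \<Rightarrow> real) \<Rightarrow> real \<Rightarrow> real" where
  "Gval A R d = Max ((\<lambda>a. d * R a Theta0 + (1 - d) * R a Theta1) ` A)"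

definition lik :: "('x \<Rightarrow> 'e \<Rightarrow> theta \<Rightarrow> real) \<Rightarrow> 'x \<Rightarrow> 'e \<Rightarrow> real" where
  "lik Q x E = Q x E Theta1 / Q x E Theta0"

definition pout :: "('x \<Rightarrow> 'e \<Rightarrow> theta \<Rightarrow> real) \<Rightarrow> 'x \<Rightarrow> 'e \<Rightarrow> real \<Rightarrow> real" where
  "pout Q x E d = d * Q x E Theta0 + (1 - d) * Q x E Theta1"

text \<open>Posterior belief after outcome x of E (Bayes rule; equals d/(d+(1-d)L(x,E))
  whenever the likelihood ratio is defined, i.e. Q(x,E,Theta0) > 0).\<close>
definition upd :: "('x \<Rightarrow> 'e \<Rightarrow> theta \<Rightarrow> real) \<Rightarrow> 'x \<Rightarrow> 'e \<Rightarrow> real \<Rightarrow> real" where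
  "upd Q x E d = d * Q x E Theta0 / pout Q x E d"

definition model_ok :: "'a set \<Rightarrow> 'e set \<Rightarrow> ('e \<Rightarrow> 'x set) \<Rightarrow> ('x \<Rightarrow> 'e \<Rightarrow> theta \<Rightarrow> real) \<Rightarrow> real \<Rightarrow> real \<Rightarrow> bool" where
  "model_ok A Es X Q Lam r \<longleftrightarrow>
     finite A \<and> A \<noteq> {} \<and> finite Es \<and> Es \<noteq> {} \<and> Lam > 0 \<and> r > 0 \<and>
     (\<forall>E\<in>Es. finite (X E) \<and> X E \<noteq> {} \<and>
        (\<forall>th. (\<forall>x\<in>X E. Q x E th \<ge> 0) \<and> (\<Sum>x\<in>X E. Q x E th) = 1) \<and>
        (\<exists>x\<in>X E. Q x E Theta0 \<noteq> Q x E Theta1))"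

type_synonym ('e, 'x) hist = "('e \<times> 'x) list"

text \<open>General (history-dependent, randomized) policy on the embedded chain of experiment
  times: at history h and current belief d it stops with probability s h d; otherwise it
  runs experiment E with probability c h d E at the next arrival of the Poisson clock.
  hpay n h d is the expected discounted payoff collected from stopping within the next n
  arrivals; each arrival contributes the discount factor E[e^{-r T}] = Lam/(Lam+r).\<close>
primrec hpay :: "real \<Rightarrow> 'e set \<Rightarrow> ('e \<Rightarrow> 'x set) \<Rightarrow> ('x \<Rightarrow> 'e \<Rightarrow> theta \<Rightarrow> real) \<Rightarrow>
    (real \<Rightarrow> real) \<Rightarrow> (('e, 'x) hist \<Rightarrow> real \<Rightarrow> real) \<Rightarrow> (('e, 'x) hist \<Rightarrow> real \<Rightarrow> 'e \<Rightarrow> real) \<Rightarrow>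
    nat \<Rightarrow> ('e, 'x) hist \<Rightarrow> real \<Rightarrow> real" where
  "hpay b Es X Q g s c 0 h d = s h d * g d"
| "hpay b Es X Q g s c (Suc n) h d = s h d * g d + (1 - s h d) * b *
     (\<Sum>E\<in>Es. c h d E * (\<Sum>x\<in>X E. pout Q x E d * hpay b Es X Q g s c n (h @ [(E, x)]) (upd Q x E d)))"

text \<open>Expected payoff E_d[e^{-r tau} G(delta_tau)] of a general policy (0 if it never stops).\<close>
definition payoff :: "'a set \<Rightarrow> ('a \<Rightarrow> theta \<Rightarrow> real) \<Rightarrow> 'e set \<Rightarrow> ('e \<Rightarrow> 'x set) \<Rightarrow>
    ('x \<Rightarrow> 'e \<Rightarrow> theta \<Rightarrow> real) \<Rightarrow> real \<Rightarrow> real \<Rightarrow>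
    (('e, 'x) hist \<Rightarrow> real \<Rightarrow> real) \<Rightarrow> (('e, 'x) hist \<Rightarrow> real \<Rightarrow> 'e \<Rightarrow> real) \<Rightarrow> real \<Rightarrow> real" where
  "payoff A R Es X Q Lam r s c d = lim (\<lambda>n. hpay (Lam / (Lam + r)) Es X Q (Gval A R) s c n [] d)"

definition valid_policy :: "'e set \<Rightarrow> (('e, 'x) hist \<Rightarrow> real \<Rightarrow> real) \<Rightarrow> (('e, 'x) hist \<Rightarrow> real \<Rightarrow> 'e \<Rightarrow> real) \<Rightarrow> bool" where
  "valid_policy Es s c \<longleftrightarrow> (\<forall>h. \<forall>d\<in>{0..1}. 0 \<le> s h d \<and> s h d \<le> 1 \<and>
      (\<forall>E\<in>Es. 0 \<le> c h d E) \<and> (\<Sum>E\<in>Es. c h d E) = 1)"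

definition optval :: "'a set \<Rightarrow> ('a \<Rightarrow> theta \<Rightarrow> real) \<Rightarrow> 'e set \<Rightarrow> ('e \<Rightarrow> 'x set) \<Rightarrow>
    ('x \<Rightarrow> 'e \<Rightarrow> theta \<Rightarrow> real) \<Rightarrow> real \<Rightarrow> real \<Rightarrow> real \<Rightarrow> real" where
  "optval A R Es X Q Lam r d =
     (SUP sc \<in> {(s, c). valid_policy Es s c}. payoff A R Es X Q Lam r (fst sc) (snd sc) d)"

definition det_payoff :: "'a set \<Rightarrow> ('a \<Rightarrow> theta \<Rightarrow> real) \<Rightarrow> 'e set \<Rightarrow> ('e \<Rightarrow> 'x set) \<Rightarrow>
    ('x \<Rightarrow> 'e \<Rightarrow> theta \<Rightarrow> real) \<Rightarrow> real \<Rightarrow> real \<Rightarrow> (real \<Rightarrow> 'e) \<Rightarrow> real set \<Rightarrow> real \<Rightarrow> real" where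
  "det_payoff A R Es X Q Lam r p I d =
     payoff A R Es X Q Lam r (\<lambda>h d. indicator I d) (\<lambda>h d E. if E = p d then 1 else 0) d"

definition det_markov_policy :: "'e set \<Rightarrow> (real \<Rightarrow> 'e) \<Rightarrow> real set \<Rightarrow> bool" where
  "det_markov_policy Es p I \<longleftrightarrow> (\<forall>d\<in>{0..1}. p d \<in> Es) \<and>
     p \<in> measurable (restrict_space borel {0..1::real}) (count_space Es) \<and>
     I \<in> sets borel \<and> I \<subseteq> {0..1}"

definition rand_payoff :: "'a set \<Rightarrow> ('a \<Rightarrow> theta \<Rightarrow> real) \<Rightarrow> 'e set \<Rightarrow> ('e \<Rightarrow> 'x set) \<Rightarrow>
    ('x \<Rightarrow> 'e \<Rightarrow> theta \<Rightarrow> real) \<Rightarrow> real \<Rightarrow> real \<Rightarrow> (real \<Rightarrow> 'e \<Rightarrow> real) \<Rightarrow> real set \<Rightarrow> real \<Rightarrow> real" where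
  "rand_payoff A R Es X Q Lam r pc Ic d =
     payoff A R Es X Q Lam r (\<lambda>h d. indicator Ic d) (\<lambda>h d E. pc d E) d"

definition cont_rand_markov_policy :: "'e set \<Rightarrow> (real \<Rightarrow> 'e \<Rightarrow> real) \<Rightarrow> real set \<Rightarrow> bool" where
  "cont_rand_markov_policy Es pc Ic \<longleftrightarrow>
     (\<forall>d\<in>{0..1}. (\<forall>E\<in>Es. 0 \<le> pc d E) \<and> (\<Sum>E\<in>Es. pc d E) = 1) \<and>
     (\<forall>E\<in>Es. continuous_on {0..1} (\<lambda>d. pc d E)) \<and>
     Ic \<in> sets borel \<and> Ic \<subseteq> {0..1}"

end

theory Submission
  imports Defs
begin

text \<open>The payoff of a stationary Markov policy is the limit of its values after \<open>n\<close> arrivals of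
  the Poisson clock, which converge geometrically with ratio \<open>Lam / (Lam + r)\<close>. For two experiment
  kernels with the same stopping set, the differences \<open>D\<^sub>n\<close> of these values satisfy
  \<open>D\<^sub>n\<^sub>+\<^sub>1 \<le> M |c - c'| + T D\<^sub>n\<close>, where \<open>T\<close> sums the value at the posterior over all
  experiments and outcomes. Each Bayes update \<open>d \<mapsto> d q\<^sub>0 / (d q\<^sub>0 + (1 - d) q\<^sub>1)\<close> with
  \<open>q\<^sub>0, q\<^sub>1 > 0\<close> is a diffeomorphism of \<open>[0,1]\<close> with bounded Jacobian, and a vanishing likelihood
  sends every belief to the absorbing beliefs 0 or 1; hence \<open>T\<close> is bounded on \<open>L\<^sup>1[0,1]\<close> for functions
  vanishing at 0 and 1, and the \<open>L\<^sup>1\<close> distance of the payoffs is controlled by the \<open>L\<^sup>1\<close> distance of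
  the kernels. Finally the kernel of the optimal deterministic policy is approximated in \<open>L\<^sup>1\<close> by a
  continuous one that is exact at 0 and 1, using closed inner approximations of its level sets and
  Urysohn's lemma.\<close>

lemma geometric_increments_convergent:
  fixes a :: "nat \<Rightarrow> real"
  assumes inc: "\<And>n. \<bar>a (Suc n) - a n\<bar> \<le> K * q ^ n" and q: "0 \<le> q" "q < 1"
  shows "convergent a" and "\<bar>lim a - a N\<bar> \<le> K * q ^ N / (1 - q)"
proof -
  define u where "u n = a (Suc n) - a n" for n
  have u_bound: "\<bar>u (n + N)\<bar> \<le> K * q ^ N * q ^ n" for n
    using inc[of "n + N"] by (simp add: u_def power_add mult_ac)
  have geometric: "summable (\<lambda>n. K * q ^ N * q ^ n)"
    using q by (intro summable_mult summable_geometric) auto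
  have abs_summable: "summable (\<lambda>n. \<bar>u (n + N)\<bar>)"
    by (rule summable_comparison_test[OF _ geometric]) (use u_bound in auto)
  then have "summable (\<lambda>n. u (n + N))"
    by (rule summable_rabs_cancel)
  then have "summable u"
    by (simp add: summable_iff_shift)
  have partial_sums: "a n = a 0 + (\<Sum>k<n. u k)" for n
    by (induction n) (auto simp: u_def)
  have "(\<lambda>n. a 0 + (\<Sum>k<n. u k)) \<longlonglongrightarrow> a 0 + suminf u"
    by (intro tendsto_add tendsto_const summable_LIMSEQ) fact
  then have "a \<longlonglongrightarrow> a 0 + suminf u"
    by (simp only: partial_sums[symmetric])
  then show "convergent a"
    by (auto simp: convergent_def)
  have lim_a: "lim a = a 0 + suminf u"
    using \<open>a \<longlonglongrightarrow> a 0 + suminf u\<close> by (rule limI)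
  have "lim a - a N = (\<Sum>n. u (n + N))"
    using suminf_minus_initial_segment[OF \<open>summable u\<close>, of N] lim_a partial_sums[of N] by simp
  also have "\<bar>\<dots>\<bar> \<le> (\<Sum>n. \<bar>u (n + N)\<bar>)"
    by (rule summable_rabs[OF abs_summable])
  also have "\<dots> \<le> (\<Sum>n. K * q ^ N * q ^ n)"
    by (rule suminf_le[OF u_bound abs_summable geometric])
  also have "\<dots> = K * q ^ N / (1 - q)"
    using q by (simp add: suminf_mult suminf_geometric summable_geometric divide_simps)
  finally show "\<bar>lim a - a N\<bar> \<le> K * q ^ N / (1 - q)" .
qed

lemma lim_abs_le:
  fixes a :: "nat \<Rightarrow> real"
  assumes "convergent a" and "\<And>n. \<bar>a n\<bar> \<le> K"
  shows "\<bar>lim a\<bar> \<le> K"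
proof -
  have "(\<lambda>n. \<bar>a n\<bar>) \<longlonglongrightarrow> \<bar>lim a\<bar>"
    using assms(1) by (intro tendsto_rabs) (simp add: convergent_LIMSEQ_iff)
  then show ?thesis
    by (rule LIMSEQ_le_const2) (use assms(2) in auto)
qed

lemma ennreal_set_integral_abs:
  fixes F :: "'a \<Rightarrow> real"
  assumes "set_integrable M A F"
  shows "ennreal (LINT x:A|M. \<bar>F x\<bar>) = (\<integral>\<^sup>+x\<in>A. ennreal \<bar>F x\<bar> \<partial>M)"
proof -
  have "integrable M (\<lambda>x. indicator A x *\<^sub>R \<bar>F x\<bar>)"
    using set_integrable_abs[OF assms] by (simp add: set_integrable_def)
  then have "ennreal (LINT x:A|M. \<bar>F x\<bar>) = (\<integral>\<^sup>+x. ennreal (indicator A x *\<^sub>R \<bar>F x\<bar>) \<partial>M)"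
    unfolding set_lebesgue_integral_def by (rule nn_integral_eq_integral[symmetric]) auto
  also have "\<dots> = (\<integral>\<^sup>+x\<in>A. ennreal \<bar>F x\<bar> \<partial>M)"
    by (intro nn_integral_cong) (simp split: split_indicator)
  finally show ?thesis .
qed

section \<open>The Bayes update as a change of variables\<close>

lemma bayes_denominator_ge:
  fixes \<alpha> \<beta> y :: real
  assumes "y \<in> {0..1}"
  shows "min \<alpha> \<beta> \<le> y * \<beta> + (1 - y) * \<alpha>"
proof -
  have "y * min \<alpha> \<beta> + (1 - y) * min \<alpha> \<beta> \<le> y * \<beta> + (1 - y) * \<alpha>"
    using assms by (intro add_mono mult_left_mono) auto
  then show ?thesis by (simp add: algebra_simps)
qed

lemma bayes_inverse_has_derivative:
  fixes \<alpha> \<beta> y :: real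
  assumes "0 < \<alpha>" "0 < \<beta>" "y \<in> {0..1}"
  shows "((\<lambda>y. y * \<beta> / (y * \<beta> + (1 - y) * \<alpha>)) has_real_derivative
    \<alpha> * \<beta> / (y * \<beta> + (1 - y) * \<alpha>)\<^sup>2) (at y)"
proof -
  define D where "D = y * \<beta> + (1 - y) * \<alpha>"
  have "0 < D" using bayes_denominator_ge[OF assms(3), of \<alpha> \<beta>] assms(1,2) by (simp add: D_def)
  then have "((\<lambda>y. y * \<beta> / (y * \<beta> + (1 - y) * \<alpha>)) has_real_derivative
      (\<beta> * D - y * \<beta> * (\<beta> - \<alpha>)) / (D * D)) (at y)"
    unfolding D_def by (auto intro!: derivative_eq_intros simp: algebra_simps)
  moreover have "(\<beta> * D - y * \<beta> * (\<beta> - \<alpha>)) / (D * D) = \<alpha> * \<beta> / D\<^sup>2"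
    unfolding D_def by (simp add: power2_eq_square algebra_simps)
  ultimately show ?thesis by (simp add: D_def)
qed

lemma bayes_update_inverse:
  fixes \<alpha> \<beta> y :: real
  assumes "0 < \<alpha>" "0 < \<beta>" "y \<in> {0..1}"
  defines "D \<equiv> y * \<beta> + (1 - y) * \<alpha>"
  shows "y * \<beta> / D * \<alpha> + (1 - y * \<beta> / D) * \<beta> = \<alpha> * \<beta> / D"
    and "y * \<beta> / D * \<alpha> / (\<alpha> * \<beta> / D) = y"
proof -
  let ?P = "y * \<beta> / D * \<alpha> + (1 - y * \<beta> / D) * \<beta>"
  have "0 < D" using bayes_denominator_ge[OF assms(3), of \<alpha> \<beta>] assms(1,2) by (simp add: D_def)
  then have "1 - y * \<beta> / D = (1 - y) * \<alpha> / D"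
    by (simp add: field_simps D_def)
  then have "?P = y * \<beta> / D * \<alpha> + (1 - y) * \<alpha> / D * \<beta>"
    by simp
  also have "\<dots> = \<alpha> * \<beta> * (y + (1 - y)) / D"
    by (simp add: add_divide_distrib[symmetric] algebra_simps)
  finally show "?P = \<alpha> * \<beta> / D"
    by simp
  show "y * \<beta> / D * \<alpha> / (\<alpha> * \<beta> / D) = y"
    using \<open>0 < D\<close> assms(1,2) by (simp add: field_simps)
qed

text \<open>Substituting \<open>d = y \<beta> / (y \<beta> + (1 - y) \<alpha>)\<close>, the inverse of the Bayes update
  \<open>d \<mapsto> d \<alpha> / (d \<alpha> + (1 - d) \<beta>)\<close>, turns the integrand into
  \<open>f y \<alpha>\<^sup>2 \<beta>\<^sup>2 / (y \<beta> + (1 - y) \<alpha>)\<^sup>3\<close>.\<close>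
lemma nn_integral_bayes_update_le:
  fixes \<alpha> \<beta> :: real and f :: "real \<Rightarrow> real"
  assumes \<alpha>\<beta>: "0 < \<alpha>" "0 < \<beta>" and f: "f \<in> borel_measurable borel" "\<And>y. 0 \<le> f y"
  shows "(\<integral>\<^sup>+d\<in>{0..1}. ennreal ((d * \<alpha> + (1 - d) * \<beta>) * f (d * \<alpha> / (d * \<alpha> + (1 - d) * \<beta>))) \<partial>lborel)
     \<le> ennreal (\<alpha>\<^sup>2 * \<beta>\<^sup>2 / (min \<alpha> \<beta>) ^ 3) * (\<integral>\<^sup>+d\<in>{0..1}. ennreal (f d) \<partial>lborel)"
proof -
  define F where "F d = (d * \<alpha> + (1 - d) * \<beta>) * f (d * \<alpha> / (d * \<alpha> + (1 - d) * \<beta>))" for d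
  define D where "D y = y * \<beta> + (1 - y) * \<alpha>" for y
  define g where "g y = y * \<beta> / D y" for y
  define g' where "g' y = \<alpha> * \<beta> / (D y)\<^sup>2" for y
  define C where "C = \<alpha>\<^sup>2 * \<beta>\<^sup>2 / (min \<alpha> \<beta>) ^ 3"
  have D_ge: "min \<alpha> \<beta> \<le> D y" if "y \<in> {0..1}" for y
    unfolding D_def by (rule bayes_denominator_ge[OF that])
  have D_pos: "0 < D y" if "y \<in> {0..1}" for y
    using D_ge[OF that] \<alpha>\<beta> by linarith
  have "continuous_on {0..1} g'"
    unfolding g'_def D_def using D_pos[unfolded D_def] by (intro continuous_intros) force+
  moreover have "F \<in> borel_measurable borel"
    unfolding F_def using f(1) by measurable
  ultimately have substitution: "(\<integral>\<^sup>+x. F x * indicator {g 0..g 1} x \<partial>lborel) =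
      (\<integral>\<^sup>+x. F (g x) * g' x * indicator {0..1} x \<partial>lborel)"
    using bayes_inverse_has_derivative[OF \<alpha>\<beta>] \<alpha>\<beta>
    by (intro nn_integral_substitution)
       (auto simp: g_def g'_def D_def set_borel_measurable_def intro!: borel_measurable_scaleR borel_measurable_indicator)
  have pointwise: "F (g y) * g' y * indicator {0..1} y \<le> C * (f y * indicator {0..1} y)" for y
  proof (cases "y \<in> {0..1}")
    case True
    have "F (g y) = \<alpha> * \<beta> / D y * f y"
      unfolding F_def g_def D_def bayes_update_inverse[OF \<alpha>\<beta> True] ..
    then have "F (g y) * g' y = f y * (\<alpha>\<^sup>2 * \<beta>\<^sup>2 / (D y) ^ 3)"
      using D_pos[OF True] by (simp add: g'_def field_simps power2_eq_square power3_eq_cube)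
    moreover have "\<alpha>\<^sup>2 * \<beta>\<^sup>2 / (D y) ^ 3 \<le> C"
      unfolding C_def using D_ge[OF True] \<alpha>\<beta> by (intro divide_left_mono power_mono mult_pos_pos) auto
    ultimately have "F (g y) * g' y \<le> f y * C"
      by (metis f(2) mult_left_mono)
    then show ?thesis
      using True by (simp add: mult.commute)
  qed simp
  have "g 0 = 0" "g 1 = 1" using \<alpha>\<beta> by (auto simp: g_def D_def)
  then have "(\<integral>\<^sup>+d\<in>{0..1}. ennreal (F d) \<partial>lborel) = (\<integral>\<^sup>+x. F (g x) * g' x * indicator {0..1} x \<partial>lborel)"
    by (simp add: substitution[symmetric] nn_integral_set_ennreal)
  also have "\<dots> \<le> (\<integral>\<^sup>+x. ennreal C * ennreal (f x * indicator {0..1} x) \<partial>lborel)"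
    using pointwise \<alpha>\<beta> by (intro nn_integral_mono) (simp add: C_def ennreal_mult'[symmetric] ennreal_leI)
  also have "\<dots> = ennreal C * (\<integral>\<^sup>+d\<in>{0..1}. ennreal (f d) \<partial>lborel)"
    by (subst nn_integral_cmult) (use f(1) in \<open>auto simp: nn_integral_set_ennreal\<close>)
  finally show ?thesis unfolding C_def F_def .
qed

section \<open>Continuous approximation of measurable selectors\<close>

lemma borel_inner_closed_approx:
  fixes S :: "real set"
  assumes "S \<in> sets borel" and "0 < e"
  obtains T where "closed T" "T \<subseteq> S" "emeasure lborel (S - T) < ennreal e"
proof -
  have "S \<in> sets lebesgue" using assms(1) by (rule sets_completionI_sets[of _ lborel, simplified])
  then obtain T where T: "closed T" "T \<subseteq> S" "emeasure lebesgue (S - T) < ennreal e"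
    using sets_lebesgue_inner_closed[OF _ assms(2)] by metis
  moreover have "S - T \<in> sets borel" using assms(1) T(1) by auto
  ultimately show ?thesis using that by (simp add: emeasure_completion main_part_sets)
qed

lemma borel_inner_closed_family:
  fixes S :: "'i \<Rightarrow> real set"
  assumes "finite J" and S: "\<And>i. S i \<in> sets borel" and "0 < e"
  obtains T where "\<And>i. closed (T i)" "\<And>i. T i \<subseteq> S i" "emeasure lborel (\<Union>i\<in>J. S i - T i) \<le> ennreal e"
proof -
  define \<delta> where "\<delta> = e / (card J + 1)"
  have "0 < \<delta>" using \<open>0 < e\<close> by (simp add: \<delta>_def)
  have "\<forall>i. \<exists>T. closed T \<and> T \<subseteq> S i \<and> emeasure lborel (S i - T) < ennreal \<delta>"
  proof
    fix i
    show "\<exists>T. closed T \<and> T \<subseteq> S i \<and> emeasure lborel (S i - T) < ennreal \<delta>"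
      by (rule borel_inner_closed_approx[OF S \<open>0 < \<delta>\<close>, of i]) blast
  qed
  from choice[OF this] obtain T where T: "\<And>i. closed (T i)" "\<And>i. T i \<subseteq> S i"
    "\<And>i. emeasure lborel (S i - T i) < ennreal \<delta>"
    by blast
  have "emeasure lborel (\<Union>i\<in>J. S i - T i) \<le> (\<Sum>i\<in>J. emeasure lborel (S i - T i))"
    using S T(1) \<open>finite J\<close> by (intro emeasure_subadditive_finite) auto
  also have "\<dots> \<le> (\<Sum>i\<in>J. ennreal \<delta>)"
    using T(3) by (intro sum_mono) (simp add: less_imp_le)
  also have "\<dots> = ennreal (card J * \<delta>)"
    using \<open>0 < \<delta>\<close> by (simp add: ennreal_of_nat_eq_real_of_nat ennreal_mult)
  also have "\<dots> \<le> ennreal e"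
    using \<open>0 < e\<close> by (intro ennreal_leI) (simp add: \<delta>_def field_simps)
  finally show ?thesis
    using that T(1,2) by blast
qed

lemma urysohn_separating_family:
  fixes K :: "'e \<Rightarrow> 'a::euclidean_space set"
  assumes "finite Es" and closed: "\<And>E. E \<in> Es \<Longrightarrow> closed (K E)"
    and disjoint: "\<And>E E'. E \<in> Es \<Longrightarrow> E' \<in> Es \<Longrightarrow> E \<noteq> E' \<Longrightarrow> K E \<inter> K E' = {}"
  obtains f :: "'e \<Rightarrow> 'a \<Rightarrow> real"
  where "\<And>E. E \<in> Es \<Longrightarrow> continuous_on UNIV (f E)" and "\<And>E x. E \<in> Es \<Longrightarrow> 0 \<le> f E x \<and> f E x \<le> 1"
    and "\<And>E x. E \<in> Es \<Longrightarrow> x \<in> K E \<Longrightarrow> f E x = 1"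
    and "\<And>E E' x. E \<in> Es \<Longrightarrow> E' \<in> Es \<Longrightarrow> E' \<noteq> E \<Longrightarrow> x \<in> K E' \<Longrightarrow> f E x = 0"
proof -
  define Others where "Others E = (\<Union>E'\<in>Es - {E}. K E')" for E
  have "\<forall>E\<in>Es. \<exists>f :: 'a \<Rightarrow> real. continuous_on UNIV f \<and> (\<forall>x. f x \<in> closed_segment 1 0) \<and>
      (\<forall>x\<in>K E. f x = 1) \<and> (\<forall>x\<in>Others E. f x = 0)"
  proof
    fix E assume "E \<in> Es"
    have "closed (Others E)" unfolding Others_def using closed \<open>finite Es\<close> by (intro closed_UN) auto
    moreover have "K E \<inter> Others E = {}" unfolding Others_def using disjoint \<open>E \<in> Es\<close> by blast
    ultimately show "\<exists>f :: 'a \<Rightarrow> real. continuous_on UNIV f \<and> (\<forall>x. f x \<in> closed_segment 1 0) \<and>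
        (\<forall>x\<in>K E. f x = 1) \<and> (\<forall>x\<in>Others E. f x = 0)"
      using Urysohn[OF closed[OF \<open>E \<in> Es\<close>], of "Others E" 1 0] by metis
  qed
  then obtain f :: "'e \<Rightarrow> 'a \<Rightarrow> real" where f: "\<forall>E\<in>Es. continuous_on UNIV (f E) \<and>
      (\<forall>x. f E x \<in> closed_segment 1 0) \<and> (\<forall>x\<in>K E. f E x = 1) \<and> (\<forall>x\<in>Others E. f E x = 0)"
    by (rule bchoice[THEN exE])
  show ?thesis
  proof (rule that)
    show "continuous_on UNIV (f E)" "0 \<le> f E x \<and> f E x \<le> 1" if "E \<in> Es" for E x
      using f that by (auto simp: closed_segment_eq_real_ivl)
    show "f E x = 1" if "E \<in> Es" "x \<in> K E" for E x
      using f that by auto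
    show "f E x = 0" if "E \<in> Es" "E' \<in> Es" "E' \<noteq> E" "x \<in> K E'" for E E' x
      using f that unfolding Others_def by blast
  qed
qed

text \<open>The weights of the experiments other than \<open>E0\<close> are normalised only where they sum to
  more than one, so that they stay exact on the sets \<open>K E\<close>; \<open>E0\<close> takes the remaining mass.\<close>
lemma continuous_kernel_exact_on_closed:
  fixes K :: "'e \<Rightarrow> 'a::euclidean_space set"
  assumes Es: "finite Es" "E0 \<in> Es" and closed: "\<And>E. E \<in> Es \<Longrightarrow> closed (K E)"
    and disjoint: "\<And>E E'. E \<in> Es \<Longrightarrow> E' \<in> Es \<Longrightarrow> E \<noteq> E' \<Longrightarrow> K E \<inter> K E' = {}"
  obtains c :: "'a \<Rightarrow> 'e \<Rightarrow> real"
  where "\<And>x E. E \<in> Es \<Longrightarrow> 0 \<le> c x E" and "\<And>x. (\<Sum>E\<in>Es. c x E) = 1"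
    and "\<And>E. continuous_on UNIV (\<lambda>x. c x E)"
    and "\<And>x E E'. E \<in> Es \<Longrightarrow> x \<in> K E \<Longrightarrow> c x E' = (if E' = E then 1 else 0)"
proof -
  obtain f :: "'e \<Rightarrow> 'a \<Rightarrow> real" where f_cont: "\<And>E. E \<in> Es \<Longrightarrow> continuous_on UNIV (f E)"
    and f_01: "\<And>E x. E \<in> Es \<Longrightarrow> 0 \<le> f E x \<and> f E x \<le> 1"
    and f_1: "\<And>E x. E \<in> Es \<Longrightarrow> x \<in> K E \<Longrightarrow> f E x = 1"
    and f_0: "\<And>E E' x. E \<in> Es \<Longrightarrow> E' \<in> Es \<Longrightarrow> E' \<noteq> E \<Longrightarrow> x \<in> K E' \<Longrightarrow> f E x = 0"
    using urysohn_separating_family[of Es K, OF Es(1) closed disjoint] by blast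
  define total where "total x = (\<Sum>E\<in>Es - {E0}. f E x)" for x
  define den where "den x = max 1 (total x)" for x
  define c where "c x E = (if E = E0 then 1 - total x / den x else if E \<in> Es then f E x / den x else 0)"
    for x E
  have den_ge_1: "1 \<le> den x" for x by (simp add: den_def)
  have total_le: "total x / den x \<le> 1" for x
    using den_ge_1[of x] by (simp add: divide_le_eq_1) (simp add: den_def)
  have "0 \<le> c x E" if "E \<in> Es" for x E
    using f_01[OF that, of x] total_le[of x] den_ge_1[of x] by (auto simp: c_def)
  moreover have "(\<Sum>E\<in>Es. c x E) = 1" for x
  proof -
    have "(\<Sum>E\<in>Es - {E0}. c x E) = total x / den x"
      by (auto simp: c_def total_def sum_divide_distrib intro: sum.cong)
    then show ?thesis using Es by (simp add: sum.remove c_def)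
  qed
  moreover have "continuous_on UNIV (\<lambda>x. c x E)" for E
  proof -
    have "continuous_on UNIV den"
      unfolding den_def total_def using f_cont by (intro continuous_intros) auto
    moreover have "den x \<noteq> 0" for x using den_ge_1[of x] by linarith
    ultimately show ?thesis
      unfolding c_def total_def using f_cont
      by (cases "E = E0"; cases "E \<in> Es") (auto intro!: continuous_intros)
  qed
  moreover have "c x E' = (if E' = E then 1 else 0)" if "E \<in> Es" "x \<in> K E" for x E E'
  proof -
    have total_K: "total x = (if E = E0 then 0 else 1)"
    proof (cases "E = E0")
      case True
      then show ?thesis using that f_0 by (auto simp: total_def intro: sum.neutral)
    next
      case False
      then have "total x = f E x + (\<Sum>E'\<in>Es - {E0} - {E}. f E' x)"
        using that Es by (simp add: total_def sum.remove)
      then show ?thesis using False that f_0 f_1 by (auto intro: sum.neutral)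
    qed
    then have "den x = 1" by (simp add: den_def)
    then show ?thesis
      using that total_K f_0[of E' E x] f_1 by (auto simp: c_def)
  qed
  ultimately show ?thesis by (rule that)
qed

section \<open>Experiment kernels and posterior means\<close>

definition experiment_kernel :: "'e set \<Rightarrow> (real \<Rightarrow> 'e \<Rightarrow> real) \<Rightarrow> bool" where
  "experiment_kernel Es c \<longleftrightarrow> (\<forall>d\<in>{0..1}. (\<forall>E\<in>Es. 0 \<le> c d E) \<and> (\<Sum>E\<in>Es. c d E) = 1)"

definition kernel_dist :: "'e set \<Rightarrow> (real \<Rightarrow> 'e \<Rightarrow> real) \<Rightarrow> (real \<Rightarrow> 'e \<Rightarrow> real) \<Rightarrow> real \<Rightarrow> real" where
  "kernel_dist Es c c' d = (\<Sum>E\<in>Es. \<bar>c d E - c' d E\<bar>)"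

definition post_mean :: "'e set \<Rightarrow> ('e \<Rightarrow> 'x set) \<Rightarrow> ('x \<Rightarrow> 'e \<Rightarrow> theta \<Rightarrow> real) \<Rightarrow>
    (real \<Rightarrow> 'e \<Rightarrow> real) \<Rightarrow> (real \<Rightarrow> real) \<Rightarrow> real \<Rightarrow> real" where
  "post_mean Es X Q c f d = (\<Sum>E\<in>Es. c d E * (\<Sum>x\<in>X E. pout Q x E d * f (upd Q x E d)))"

abbreviation post_sum :: "'e set \<Rightarrow> ('e \<Rightarrow> 'x set) \<Rightarrow> ('x \<Rightarrow> 'e \<Rightarrow> theta \<Rightarrow> real) \<Rightarrow>
    (real \<Rightarrow> real) \<Rightarrow> real \<Rightarrow> real" where
  "post_sum Es X Q \<equiv> post_mean Es X Q (\<lambda>_ _. 1)"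

primrec markov_value :: "real \<Rightarrow> 'e set \<Rightarrow> ('e \<Rightarrow> 'x set) \<Rightarrow> ('x \<Rightarrow> 'e \<Rightarrow> theta \<Rightarrow> real) \<Rightarrow>
    (real \<Rightarrow> real) \<Rightarrow> (real \<Rightarrow> real) \<Rightarrow> (real \<Rightarrow> 'e \<Rightarrow> real) \<Rightarrow> nat \<Rightarrow> real \<Rightarrow> real" where
  "markov_value b Es X Q g s c 0 d = s d * g d"
| "markov_value b Es X Q g s c (Suc n) d =
     s d * g d + (1 - s d) * b * post_mean Es X Q c (markov_value b Es X Q g s c n) d"

lemma hpay_markov: "hpay b Es X Q g (\<lambda>h d. s d) (\<lambda>h d E. c d E) n h d = markov_value b Es X Q g s c n d"
  by (induction n arbitrary: h d) (simp_all add: post_mean_def)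

declare markov_value.simps(2) [simp del]

lemma kernel_dist_nonneg: "0 \<le> kernel_dist Es c c' d"
  unfolding kernel_dist_def by (intro sum_nonneg) simp

lemma kernel_dist_measurable:
  assumes [measurable]: "\<And>E. (\<lambda>d. c d E) \<in> borel_measurable borel" "\<And>E. (\<lambda>d. c' d E) \<in> borel_measurable borel"
  shows "kernel_dist Es c c' \<in> borel_measurable borel"
  unfolding kernel_dist_def by measurable

lemma kernel_dist_le_2:
  assumes "experiment_kernel Es c" "experiment_kernel Es c'" "d \<in> {0..1}"
  shows "kernel_dist Es c c' d \<le> 2"
proof -
  have "0 \<le> c d E \<and> 0 \<le> c' d E" if "E \<in> Es" for E
    using assms that by (simp add: experiment_kernel_def)
  then have "kernel_dist Es c c' d \<le> (\<Sum>E\<in>Es. c d E + c' d E)"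
    unfolding kernel_dist_def by (intro sum_mono) (auto simp: abs_le_iff)
  also have "\<dots> = 2" using assms by (simp add: sum.distrib experiment_kernel_def)
  finally show ?thesis .
qed

lemma nn_integral_kernel_dist_le:
  assumes "experiment_kernel Es c" "experiment_kernel Es c'" "B \<in> sets borel"
    and exact: "\<And>d. d \<in> {0..1} - B \<Longrightarrow> kernel_dist Es c c' d = 0"
  shows "(\<integral>\<^sup>+d\<in>{0..1}. ennreal (kernel_dist Es c c' d) \<partial>lborel) \<le> 2 * emeasure lborel B"
proof -
  have "(\<integral>\<^sup>+d\<in>{0..1}. ennreal (kernel_dist Es c c' d) \<partial>lborel) \<le> (\<integral>\<^sup>+d. 2 * indicator B d \<partial>lborel)"
    using ennreal_leI[OF kernel_dist_le_2[OF assms(1,2)]] exact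
    by (intro nn_integral_mono) (auto split: split_indicator)
  also have "\<dots> = 2 * emeasure lborel B"
    using assms(3) by (simp add: nn_integral_cmult_indicator)
  finally show ?thesis .
qed

text \<open>The kernel of a selector \<open>p\<close> vanishes outside \<open>[0,1]\<close>, so that it is Borel measurable
  although \<open>p\<close> is only measurable on \<open>[0,1]\<close>.\<close>
definition det_kernel :: "(real \<Rightarrow> 'e) \<Rightarrow> real \<Rightarrow> 'e \<Rightarrow> real" where
  "det_kernel p d E = indicator {x \<in> {0..1}. p x = E} d"

lemma det_kernel_eq: "d \<in> {0..1} \<Longrightarrow> det_kernel p d E = (if E = p d then 1 else 0)"
  by (auto simp: det_kernel_def)

lemma experiment_kernel_det_kernel:
  assumes "finite Es" "\<And>d. d \<in> {0..1} \<Longrightarrow> p d \<in> Es"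
  shows "experiment_kernel Es (det_kernel p)"
  using assms by (simp add: experiment_kernel_def det_kernel_eq sum.delta)

lemma det_kernel_measurable:
  assumes "{d \<in> {0..1}. p d = E} \<in> sets borel"
  shows "(\<lambda>d. det_kernel p d E) \<in> borel_measurable borel"
  unfolding det_kernel_def using assms by measurable

lemma det_markov_policy_level_sets:
  assumes "det_markov_policy Es p I"
  shows "{d \<in> {0..1}. p d = E} \<in> sets borel"
proof (cases "E \<in> Es")
  case True
  have "p -` {E} \<inter> space (restrict_space borel {0..1::real}) \<in> sets (restrict_space borel {0..1})"
    using assms True by (intro measurable_sets[of p _ "count_space Es"]) (auto simp: det_markov_policy_def)
  then have "{0..1} \<inter> p -` {E} \<in> sets borel"
    by (subst (asm) sets_restrict_space_iff) (auto simp: Int_commute)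
  moreover have "{d \<in> {0..1}. p d = E} = {0..1} \<inter> p -` {E}"
    by auto
  ultimately show ?thesis
    by simp
next
  case False
  then have empty: "{d \<in> {0..1}. p d = E} = {}"
    using assms by (auto simp: det_markov_policy_def)
  show ?thesis
    unfolding empty by simp
qed

lemma post_mean_diff:
  "post_mean Es X Q c f d - post_mean Es X Q c g d = post_mean Es X Q c (\<lambda>y. f y - g y) d"
  unfolding post_mean_def sum_subtractf[symmetric] right_diff_distrib[symmetric] by simp

lemma post_mean_vanishes_at_0_1:
  assumes "b \<in> {0, 1}" and "f b = 0"
  shows "post_mean Es X Q c f b = 0"
proof -
  have vanish: "pout Q x E b * f (upd Q x E b) = 0" for x E
    using assms by (cases "Q x E Theta0 = 0") (auto simp: upd_def pout_def)
  show ?thesis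
    unfolding post_mean_def by (simp add: vanish)
qed

lemma upd_measurable [measurable]: "(\<lambda>d. upd Q x E d) \<in> borel_measurable borel"
  unfolding upd_def pout_def by measurable

lemma pout_measurable [measurable]: "(\<lambda>d. pout Q x E d) \<in> borel_measurable borel"
  unfolding pout_def by measurable

lemma post_mean_measurable:
  assumes [measurable]: "f \<in> borel_measurable borel" "\<And>E. (\<lambda>d. c d E) \<in> borel_measurable borel"
  shows "post_mean Es X Q c f \<in> borel_measurable borel"
  unfolding post_mean_def by measurable

definition update_jacobian_bound :: "real \<Rightarrow> real \<Rightarrow> real" where
  "update_jacobian_bound \<alpha> \<beta> = (if 0 < \<alpha> \<and> 0 < \<beta> then \<alpha>\<^sup>2 * \<beta>\<^sup>2 / (min \<alpha> \<beta>) ^ 3 else 0)"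

lemma update_jacobian_bound_nonneg: "0 \<le> update_jacobian_bound \<alpha> \<beta>"
  by (simp add: update_jacobian_bound_def)

section \<open>The Bayesian model\<close>

locale bayes_model =
  fixes A :: "'a set" and R :: "'a \<Rightarrow> theta \<Rightarrow> real"
    and Es :: "'e set" and X :: "'e \<Rightarrow> 'x set" and Q :: "'x \<Rightarrow> 'e \<Rightarrow> theta \<Rightarrow> real"
    and Lam r :: real
  assumes model_ok: "model_ok A Es X Q Lam r"
begin

lemma finite_Es: "finite Es" and Es_nonempty: "Es \<noteq> {}"
  and Q_nonneg: "E \<in> Es \<Longrightarrow> x \<in> X E \<Longrightarrow> 0 \<le> Q x E th"
  and sum_Q: "E \<in> Es \<Longrightarrow> (\<Sum>x\<in>X E. Q x E th) = 1"
  using model_ok by (auto simp: model_ok_def)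

lemma pout_nonneg: "E \<in> Es \<Longrightarrow> x \<in> X E \<Longrightarrow> d \<in> {0..1} \<Longrightarrow> 0 \<le> pout Q x E d"
  unfolding pout_def using Q_nonneg[of E x] by auto

lemma sum_pout: "E \<in> Es \<Longrightarrow> (\<Sum>x\<in>X E. pout Q x E d) = 1"
  unfolding pout_def using sum_Q[of E] by (simp add: sum.distrib sum_distrib_left[symmetric])

lemma upd_in_unit:
  assumes "E \<in> Es" "x \<in> X E" "d \<in> {0..1}"
  shows "upd Q x E d \<in> {0..1}"
proof -
  have "0 \<le> d * Q x E Theta0" "d * Q x E Theta0 \<le> pout Q x E d"
    using assms Q_nonneg[of E x] unfolding pout_def by auto
  then show ?thesis
    unfolding upd_def by (cases "pout Q x E d = 0") (auto simp: divide_le_eq_1)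
qed

lemma kernel_le_1:
  assumes "experiment_kernel Es c" "d \<in> {0..1}" "E \<in> Es"
  shows "c d E \<le> 1"
proof -
  have "c d E \<le> (\<Sum>E\<in>Es. c d E)"
    using assms finite_Es by (intro member_le_sum) (auto simp: experiment_kernel_def)
  then show ?thesis using assms by (simp add: experiment_kernel_def)
qed

lemma abs_outcome_mean_le:
  assumes "E \<in> Es" "d \<in> {0..1}"
  shows "\<bar>\<Sum>x\<in>X E. pout Q x E d * f (upd Q x E d)\<bar> \<le> (\<Sum>x\<in>X E. pout Q x E d * \<bar>f (upd Q x E d)\<bar>)"
  using assms pout_nonneg by (intro order.trans[OF sum_abs] sum_mono) (simp add: abs_mult)

lemma outcome_mean_le:
  assumes "E \<in> Es" "d \<in> {0..1}" and f: "\<And>y. y \<in> {0..1} \<Longrightarrow> f y \<le> K"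
  shows "(\<Sum>x\<in>X E. pout Q x E d * f (upd Q x E d)) \<le> K"
proof -
  have "(\<Sum>x\<in>X E. pout Q x E d * f (upd Q x E d)) \<le> (\<Sum>x\<in>X E. pout Q x E d * K)"
    using assms pout_nonneg upd_in_unit by (intro sum_mono mult_left_mono) auto
  also have "\<dots> = K"
    using sum_pout[OF assms(1)] by (simp add: sum_distrib_right[symmetric])
  finally show ?thesis .
qed

lemma abs_outcome_mean_le_bound:
  assumes "E \<in> Es" "d \<in> {0..1}" and f: "\<And>y. y \<in> {0..1} \<Longrightarrow> \<bar>f y\<bar> \<le> K"
  shows "\<bar>\<Sum>x\<in>X E. pout Q x E d * f (upd Q x E d)\<bar> \<le> K"
  using abs_outcome_mean_le[OF assms(1,2)] outcome_mean_le[OF assms(1,2), of "\<lambda>y. \<bar>f y\<bar>"] f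
  by (meson order.trans)

lemma abs_post_mean_le:
  assumes c: "experiment_kernel Es c" and d: "d \<in> {0..1}" and f: "\<And>y. y \<in> {0..1} \<Longrightarrow> \<bar>f y\<bar> \<le> K"
  shows "\<bar>post_mean Es X Q c f d\<bar> \<le> K"
proof -
  have "\<bar>post_mean Es X Q c f d\<bar> \<le> (\<Sum>E\<in>Es. c d E * \<bar>\<Sum>x\<in>X E. pout Q x E d * f (upd Q x E d)\<bar>)"
    using c d unfolding post_mean_def experiment_kernel_def
    by (intro order.trans[OF sum_abs]) (simp add: abs_mult)
  also have "\<dots> \<le> (\<Sum>E\<in>Es. c d E * K)"
    using c d f unfolding experiment_kernel_def
    by (intro sum_mono mult_left_mono abs_outcome_mean_le_bound) auto
  also have "\<dots> = K"
    using c d by (simp add: experiment_kernel_def sum_distrib_right[symmetric])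
  finally show ?thesis .
qed

lemma abs_post_mean_le_post_sum:
  assumes c: "experiment_kernel Es c" and d: "d \<in> {0..1}"
  shows "\<bar>post_mean Es X Q c f d\<bar> \<le> post_sum Es X Q (\<lambda>y. \<bar>f y\<bar>) d"
  unfolding post_mean_def
proof (intro order.trans[OF sum_abs] sum_mono)
  fix E assume E: "E \<in> Es"
  have "0 \<le> c d E" "c d E \<le> 1"
    using c d E kernel_le_1 by (auto simp: experiment_kernel_def)
  then show "\<bar>c d E * (\<Sum>x\<in>X E. pout Q x E d * f (upd Q x E d))\<bar>
      \<le> 1 * (\<Sum>x\<in>X E. pout Q x E d * \<bar>f (upd Q x E d)\<bar>)"
    unfolding abs_mult using abs_outcome_mean_le[OF E d] by (intro mult_mono) auto
qed

lemma post_mean_kernel_diff_le: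
  assumes d: "d \<in> {0..1}" and f: "\<And>y. y \<in> {0..1} \<Longrightarrow> \<bar>f y\<bar> \<le> K"
  shows "\<bar>post_mean Es X Q c f d - post_mean Es X Q c' f d\<bar> \<le> K * kernel_dist Es c c' d"
proof -
  have "\<bar>post_mean Es X Q c f d - post_mean Es X Q c' f d\<bar>
      = \<bar>\<Sum>E\<in>Es. (c d E - c' d E) * (\<Sum>x\<in>X E. pout Q x E d * f (upd Q x E d))\<bar>"
    by (simp add: post_mean_def sum_subtractf[symmetric] left_diff_distrib)
  also have "\<dots> \<le> (\<Sum>E\<in>Es. \<bar>c d E - c' d E\<bar> * K)"
    using abs_outcome_mean_le_bound[of _ d f K, OF _ d f]
    by (intro order.trans[OF sum_abs] sum_mono) (simp add: abs_mult mult_left_mono)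
  also have "\<dots> = K * kernel_dist Es c c' d"
    by (simp add: kernel_dist_def sum_distrib_left mult.commute)
  finally show ?thesis .
qed

lemma post_mean_cong:
  assumes "\<And>E. E \<in> Es \<Longrightarrow> c d E = c' d E" and "d \<in> {0..1}"
    and "\<And>y. y \<in> {0..1} \<Longrightarrow> f y = f' y"
  shows "post_mean Es X Q c f d = post_mean Es X Q c' f' d"
  unfolding post_mean_def using assms upd_in_unit by (auto intro!: sum.cong)

definition transition_bound :: real where
  "transition_bound = (\<Sum>E\<in>Es. \<Sum>x\<in>X E. update_jacobian_bound (Q x E Theta0) (Q x E Theta1))"

lemma transition_bound_nonneg: "0 \<le> transition_bound"
  unfolding transition_bound_def by (intro sum_nonneg update_jacobian_bound_nonneg)

lemma nn_integral_outcome_term_le: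
  assumes "E \<in> Es" "x \<in> X E"
    and f: "f \<in> borel_measurable borel" "\<And>y. 0 \<le> f y" "f 0 = 0" "f 1 = 0"
  shows "(\<integral>\<^sup>+d\<in>{0..1}. ennreal (pout Q x E d * f (upd Q x E d)) \<partial>lborel)
    \<le> ennreal (update_jacobian_bound (Q x E Theta0) (Q x E Theta1)) * (\<integral>\<^sup>+d\<in>{0..1}. ennreal (f d) \<partial>lborel)"
proof (cases "0 < Q x E Theta0 \<and> 0 < Q x E Theta1")
  case True
  then show ?thesis
    using nn_integral_bayes_update_le[of "Q x E Theta0" "Q x E Theta1", OF _ _ f(1,2)]
    by (simp add: update_jacobian_bound_def pout_def upd_def)
next
  case False
  text \<open>A vanishing likelihood sends every belief to 0 or 1.\<close>
  have "Q x E Theta0 = 0 \<or> Q x E Theta1 = 0"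
    using False Q_nonneg[OF assms(1,2), of Theta0] Q_nonneg[OF assms(1,2), of Theta1] by linarith
  then have "upd Q x E d = 0 \<or> upd Q x E d = 1" for d
    by (cases "d * Q x E Theta0 = 0") (auto simp: upd_def pout_def)
  then have "f (upd Q x E d) = 0" for d
    using f(3,4) by metis
  then show ?thesis by simp
qed

lemma nn_integral_post_sum_le:
  assumes f: "f \<in> borel_measurable borel" "\<And>y. 0 \<le> f y" "f 0 = 0" "f 1 = 0"
  shows "(\<integral>\<^sup>+d\<in>{0..1}. ennreal (post_sum Es X Q f d) \<partial>lborel)
    \<le> ennreal transition_bound * (\<integral>\<^sup>+d\<in>{0..1}. ennreal (f d) \<partial>lborel)"
proof -
  let ?term = "\<lambda>E x d. ennreal (pout Q x E d * f (upd Q x E d)) * indicator {0..1} d"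
  let ?J = "\<lambda>E x. update_jacobian_bound (Q x E Theta0) (Q x E Theta1)"
  have "(\<integral>\<^sup>+d\<in>{0..1}. ennreal (post_sum Es X Q f d) \<partial>lborel)
      = (\<integral>\<^sup>+d. (\<Sum>E\<in>Es. \<Sum>x\<in>X E. ?term E x d) \<partial>lborel)"
    using f(2) pout_nonneg
    by (intro nn_integral_cong) (auto simp: post_mean_def sum_nonneg split: split_indicator)
  also have "\<dots> = (\<Sum>E\<in>Es. \<Sum>x\<in>X E. \<integral>\<^sup>+d. ?term E x d \<partial>lborel)"
    using f(1) by (simp add: nn_integral_sum)
  also have "\<dots> \<le> (\<Sum>E\<in>Es. \<Sum>x\<in>X E. ennreal (?J E x) * (\<integral>\<^sup>+d\<in>{0..1}. ennreal (f d) \<partial>lborel))"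
    using nn_integral_outcome_term_le[OF _ _ f] by (intro sum_mono) auto
  also have "\<dots> = ennreal transition_bound * (\<integral>\<^sup>+d\<in>{0..1}. ennreal (f d) \<partial>lborel)"
    by (simp add: transition_bound_def sum_distrib_right[symmetric] update_jacobian_bound_nonneg sum_nonneg)
  finally show ?thesis .
qed

definition disc :: real where "disc = Lam / (Lam + r)"

lemma disc_nonneg: "0 \<le> disc" and disc_less_1: "disc < 1"
  using model_ok by (auto simp: model_ok_def disc_def)

definition Gmax :: real where "Gmax = (\<Sum>a\<in>A. \<bar>R a Theta0\<bar> + \<bar>R a Theta1\<bar>)"

lemma Gmax_nonneg: "0 \<le> Gmax"
  unfolding Gmax_def by (intro sum_nonneg) simp

lemma abs_Gval_le:
  assumes d: "d \<in> {0..1}"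
  shows "\<bar>Gval A R d\<bar> \<le> Gmax"
proof -
  have A: "finite A" "A \<noteq> {}" using model_ok by (auto simp: model_ok_def)
  have "\<bar>d * R a Theta0 + (1 - d) * R a Theta1\<bar> \<le> Gmax" if "a \<in> A" for a
  proof -
    have "\<bar>d * R a Theta0 + (1 - d) * R a Theta1\<bar> \<le> d * \<bar>R a Theta0\<bar> + (1 - d) * \<bar>R a Theta1\<bar>"
      using d by (auto simp: abs_mult intro!: order.trans[OF abs_triangle_ineq])
    also have "\<dots> \<le> \<bar>R a Theta0\<bar> + \<bar>R a Theta1\<bar>"
      using d by (auto intro!: add_mono mult_left_le_one_le)
    also have "\<dots> \<le> Gmax"
      unfolding Gmax_def using A that by (intro member_le_sum) auto
    finally show ?thesis .
  qed
  moreover have "Gval A R d \<in> (\<lambda>a. d * R a Theta0 + (1 - d) * R a Theta1) ` A"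
    unfolding Gval_def using A by (intro Max_in) auto
  ultimately show ?thesis by auto
qed

lemma Gval_measurable [measurable]: "Gval A R \<in> borel_measurable borel"
  unfolding Gval_def using model_ok by (intro borel_measurable_Max) (auto simp: model_ok_def)

lemma post_sum_nonneg:
  assumes "\<And>y. 0 \<le> f y" and "d \<in> {0..1}"
  shows "0 \<le> post_sum Es X Q f d"
  unfolding post_mean_def using assms pout_nonneg by (auto intro!: sum_nonneg)

definition tail_bound :: "nat \<Rightarrow> real" where
  "tail_bound N = Gmax * disc * disc ^ N / (1 - disc)"

lemma tail_bound_nonneg: "0 \<le> tail_bound N"
  unfolding tail_bound_def using Gmax_nonneg disc_nonneg disc_less_1 by simp

lemma tail_bound_tendsto_0: "tail_bound \<longlonglongrightarrow> 0"
  unfolding tail_bound_def[abs_def] using disc_nonneg disc_less_1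
  by (intro tendsto_divide_zero tendsto_mult_right_zero LIMSEQ_power_zero) simp

text \<open>The level sets of \<open>p\<close> are approximated from inside by closed sets (plus the absorbing
  beliefs 0 and 1), on which Urysohn's lemma makes a continuous kernel exact.\<close>
lemma continuous_kernel_approx:
  assumes p: "\<And>d. d \<in> {0..1} \<Longrightarrow> p d \<in> Es" and level_sets: "\<And>E. {d \<in> {0..1}. p d = E} \<in> sets borel"
    and "0 < \<eta>"
  obtains c where "experiment_kernel Es c" and "\<And>E. continuous_on UNIV (\<lambda>d. c d E)"
    and "kernel_dist Es (det_kernel p) c 0 = 0" and "kernel_dist Es (det_kernel p) c 1 = 0"
    and "(\<integral>\<^sup>+d\<in>{0..1}. ennreal (kernel_dist Es (det_kernel p) c d) \<partial>lborel) \<le> ennreal \<eta>"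
proof -
  define S where "S E = {d \<in> {0..1}. p d = E}" for E
  obtain T where T: "\<And>E. closed (T E)" "\<And>E. T E \<subseteq> S E"
    and B_small: "emeasure lborel (\<Union>E\<in>Es. S E - T E) \<le> ennreal (\<eta> / 2)"
    using borel_inner_closed_family[OF finite_Es, of S "\<eta> / 2"] level_sets \<open>0 < \<eta>\<close>
    unfolding S_def by auto
  define K where "K E = T E \<union> ({0, 1} \<inter> S E)" for E
  have K_closed: "closed (K E)" for E
    unfolding K_def by (intro closed_Un[OF T(1)] finite_imp_closed) auto
  have K_S: "K E \<subseteq> S E" for E unfolding K_def using T(2) by blast
  obtain E0 where "E0 \<in> Es" using Es_nonempty by blast
  obtain c :: "real \<Rightarrow> 'e \<Rightarrow> real"
    where c_nonneg: "\<And>x E. E \<in> Es \<Longrightarrow> 0 \<le> c x E" and c_sum: "\<And>x. (\<Sum>E\<in>Es. c x E) = 1"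
    and c_cont: "\<And>E. continuous_on UNIV (\<lambda>x. c x E)"
    and c_exact: "\<And>x E E'. E \<in> Es \<Longrightarrow> x \<in> K E \<Longrightarrow> c x E' = (if E' = E then 1 else 0)"
    using continuous_kernel_exact_on_closed[of Es E0 K, OF finite_Es \<open>E0 \<in> Es\<close> K_closed]
      K_S unfolding S_def by blast
  have kernels: "experiment_kernel Es (det_kernel p)" "experiment_kernel Es c"
    using experiment_kernel_det_kernel[OF finite_Es p] c_nonneg c_sum by (auto simp: experiment_kernel_def)
  have exact: "kernel_dist Es (det_kernel p) c d = 0" if "d \<in> {0..1}" "d \<in> K (p d)" for d
    using that c_exact[OF p] by (simp add: kernel_dist_def det_kernel_eq)
  define B where "B = (\<Union>E\<in>Es. S E - T E)"
  have B: "B \<in> sets borel" unfolding B_def using level_sets T(1) finite_Es by (auto simp: S_def)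
  have "2 * emeasure lborel B \<le> ennreal \<eta>"
    using mult_left_mono[OF B_small[folded B_def], of 2] ennreal_mult[of 2 "\<eta> / 2"] \<open>0 < \<eta>\<close> by simp
  moreover have "d \<in> K (p d)" if "d \<in> {0..1} - B" for d
    using that p unfolding B_def K_def S_def by auto
  then have "(\<integral>\<^sup>+d\<in>{0..1}. ennreal (kernel_dist Es (det_kernel p) c d) \<partial>lborel) \<le> 2 * emeasure lborel B"
    using kernels B exact by (intro nn_integral_kernel_dist_le) auto
  moreover have "0 \<in> K (p 0)" "1 \<in> K (p 1)"
    using p by (auto simp: K_def S_def)
  ultimately show ?thesis
    using that kernels(2) c_cont exact by auto
qed

end

section \<open>Values of stationary Markov policies\<close>

locale bayes_stopping = bayes_model +
  fixes s :: "real \<Rightarrow> real"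
  assumes stop_prob: "d \<in> {0..1} \<Longrightarrow> 0 \<le> s d \<and> s d \<le> 1"
    and stop_measurable [measurable]: "s \<in> borel_measurable borel"
begin

abbreviation V where
  "V c n \<equiv> markov_value disc Es X Q (Gval A R) s c n"

lemma payoff_eq_lim_markov_value:
  "payoff A R Es X Q Lam r (\<lambda>h d. s d) (\<lambda>h d E. c d E) d = lim (\<lambda>n. V c n d)"
  by (simp add: payoff_def hpay_markov disc_def)

lemma discounted_stop_le:
  assumes "d \<in> {0..1}"
  shows "0 \<le> (1 - s d) * disc" and "(1 - s d) * disc \<le> 1"
  using stop_prob[OF assms] disc_nonneg disc_less_1 by (auto intro: mult_le_one)

lemma abs_markov_value_le:
  assumes c: "experiment_kernel Es c" and "d \<in> {0..1}"
  shows "\<bar>V c n d\<bar> \<le> Gmax"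
  using \<open>d \<in> {0..1}\<close>
proof (induction n arbitrary: d)
  case 0
  have "s d * \<bar>Gval A R d\<bar> \<le> \<bar>Gval A R d\<bar>"
    using stop_prob[OF 0] by (intro mult_left_le_one_le) auto
  then show ?case
    using abs_Gval_le[OF 0] stop_prob[OF 0] by (simp add: abs_mult)
next
  case (Suc n)
  have IH: "\<bar>post_mean Es X Q c (V c n) d\<bar> \<le> Gmax"
    by (rule abs_post_mean_le[OF c Suc.prems]) (rule Suc.IH)
  have "disc * \<bar>post_mean Es X Q c (V c n) d\<bar> \<le> \<bar>post_mean Es X Q c (V c n) d\<bar>"
    using disc_nonneg disc_less_1 by (intro mult_left_le_one_le) auto
  then have "(1 - s d) * disc * \<bar>post_mean Es X Q c (V c n) d\<bar> \<le> (1 - s d) * Gmax"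
    using IH stop_prob[OF Suc.prems] by (simp add: mult.assoc mult_left_mono)
  moreover have "s d * \<bar>Gval A R d\<bar> \<le> s d * Gmax"
    using abs_Gval_le[OF Suc.prems] stop_prob[OF Suc.prems] by (simp add: mult_left_mono)
  moreover have "\<bar>V c (Suc n) d\<bar> \<le> s d * \<bar>Gval A R d\<bar> + (1 - s d) * disc * \<bar>post_mean Es X Q c (V c n) d\<bar>"
    using stop_prob[OF Suc.prems] disc_nonneg
    by (auto simp: markov_value.simps(2) abs_mult intro!: order.trans[OF abs_triangle_ineq])
  ultimately show ?case by (simp add: algebra_simps)
qed

lemma markov_value_Suc_diff_le:
  assumes c: "experiment_kernel Es c" and "d \<in> {0..1}"
  shows "\<bar>V c (Suc n) d - V c n d\<bar> \<le> Gmax * disc ^ Suc n"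
  using \<open>d \<in> {0..1}\<close>
proof (induction n arbitrary: d)
  case 0
  have "\<bar>post_mean Es X Q c (V c 0) d\<bar> \<le> Gmax"
    using abs_post_mean_le[OF c 0 abs_markov_value_le[OF c]] .
  moreover have "(1 - s d) * disc \<le> disc"
    using stop_prob[OF 0] disc_nonneg by (intro mult_left_le_one_le) auto
  ultimately have "(1 - s d) * disc * \<bar>post_mean Es X Q c (V c 0) d\<bar> \<le> disc * Gmax"
    using discounted_stop_le[OF 0] disc_nonneg by (intro mult_mono) auto
  then show ?case
    using stop_prob[OF 0] disc_nonneg by (simp add: markov_value.simps(2) abs_mult mult.commute)
next
  case (Suc n)
  have step: "V c (Suc (Suc n)) d - V c (Suc n) d
      = (1 - s d) * disc * post_mean Es X Q c (\<lambda>y. V c (Suc n) y - V c n y) d"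
    unfolding markov_value.simps(2)[where n = "Suc n" and d = d] markov_value.simps(2)[where n = n and d = d]
    by (simp add: post_mean_diff[symmetric] algebra_simps)
  have "(1 - s d) * disc \<le> disc"
    using stop_prob[OF Suc.prems] disc_nonneg by (intro mult_left_le_one_le) auto
  moreover have "\<bar>post_mean Es X Q c (\<lambda>y. V c (Suc n) y - V c n y) d\<bar> \<le> Gmax * disc ^ Suc n"
    by (rule abs_post_mean_le[OF c Suc.prems]) (rule Suc.IH)
  ultimately have "(1 - s d) * disc * \<bar>post_mean Es X Q c (\<lambda>y. V c (Suc n) y - V c n y) d\<bar>
      \<le> disc * (Gmax * disc ^ Suc n)"
    using discounted_stop_le[OF Suc.prems] disc_nonneg by (intro mult_mono) auto
  then show ?case
    unfolding step abs_mult[of "(1 - s d) * disc"] abs_of_nonneg[OF discounted_stop_le(1)[OF Suc.prems]]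
    by (simp add: mult_ac)
qed

lemma markov_value_convergent:
  assumes "experiment_kernel Es c" "d \<in> {0..1}"
  shows "convergent (\<lambda>n. V c n d)" and "\<bar>lim (\<lambda>n. V c n d) - V c N d\<bar> \<le> tail_bound N"
proof -
  have increments: "\<bar>V c (Suc n) d - V c n d\<bar> \<le> (Gmax * disc) * disc ^ n" for n
    using markov_value_Suc_diff_le[OF assms] by (simp add: mult_ac)
  show "convergent (\<lambda>n. V c n d)"
    by (rule geometric_increments_convergent(1)[OF increments disc_nonneg disc_less_1])
  show "\<bar>lim (\<lambda>n. V c n d) - V c N d\<bar> \<le> tail_bound N"
    using geometric_increments_convergent(2)[OF increments disc_nonneg disc_less_1]
    by (simp add: tail_bound_def)
qed

lemma abs_lim_markov_value_le:
  assumes "experiment_kernel Es c" "d \<in> {0..1}"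
  shows "\<bar>lim (\<lambda>n. V c n d)\<bar> \<le> Gmax"
  using markov_value_convergent(1)[OF assms] abs_markov_value_le[OF assms] by (rule lim_abs_le)

lemma markov_value_cong:
  assumes "\<And>d E. d \<in> {0..1} \<Longrightarrow> E \<in> Es \<Longrightarrow> c d E = c' d E" and "d \<in> {0..1}"
  shows "V c n d = V c' n d"
  using assms(2)
proof (induction n arbitrary: d)
  case (Suc n)
  then have "post_mean Es X Q c (V c n) d = post_mean Es X Q c' (V c' n) d"
    using assms(1) by (intro post_mean_cong) auto
  then show ?case by (simp add: markov_value.simps(2))
qed simp

lemma markov_value_det_kernel:
  assumes "d \<in> {0..1}"
  shows "V (\<lambda>d E. if E = p d then 1 else 0) n d = V (det_kernel p) n d"
  using assms by (intro markov_value_cong) (simp_all add: det_kernel_eq)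

lemma markov_value_measurable:
  assumes "\<And>E. (\<lambda>d. c d E) \<in> borel_measurable borel"
  shows "V c n \<in> borel_measurable borel"
proof (induction n)
  case (Suc n)
  note [measurable] = Suc.IH post_mean_measurable[OF Suc.IH assms]
  show ?case unfolding markov_value.simps(2)[abs_def] by measurable
qed simp

lemma markov_value_diff_Suc_le:
  assumes c: "experiment_kernel Es c" and c': "experiment_kernel Es c'" and d: "d \<in> {0..1}"
  shows "\<bar>V c (Suc n) d - V c' (Suc n) d\<bar>
    \<le> Gmax * kernel_dist Es c c' d + post_sum Es X Q (\<lambda>y. \<bar>V c n y - V c' n y\<bar>) d"
proof -
  have step: "V c (Suc n) d - V c' (Suc n) d = (1 - s d) * disc *
      ((post_mean Es X Q c (V c n) d - post_mean Es X Q c' (V c n) d)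
        + post_mean Es X Q c' (\<lambda>y. V c n y - V c' n y) d)"
    unfolding markov_value.simps(2)[where c = c and n = n and d = d]
      markov_value.simps(2)[where c = c' and n = n and d = d]
    by (simp add: post_mean_diff[symmetric] algebra_simps)
  have "\<bar>post_mean Es X Q c (V c n) d - post_mean Es X Q c' (V c n) d\<bar> \<le> Gmax * kernel_dist Es c c' d"
    by (rule post_mean_kernel_diff_le[OF d]) (rule abs_markov_value_le[OF c])
  moreover have "\<bar>post_mean Es X Q c' (\<lambda>y. V c n y - V c' n y) d\<bar> \<le> post_sum Es X Q (\<lambda>y. \<bar>V c n y - V c' n y\<bar>) d"
    by (rule abs_post_mean_le_post_sum[OF c' d])
  ultimately have "\<bar>(post_mean Es X Q c (V c n) d - post_mean Es X Q c' (V c n) d)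
        + post_mean Es X Q c' (\<lambda>y. V c n y - V c' n y) d\<bar>
      \<le> Gmax * kernel_dist Es c c' d + post_sum Es X Q (\<lambda>y. \<bar>V c n y - V c' n y\<bar>) d"
    by linarith
  then show ?thesis
    unfolding step abs_mult[of "(1 - s d) * disc"] abs_of_nonneg[OF discounted_stop_le(1)[OF d]]
    using discounted_stop_le[OF d] mult_mono[of "(1 - s d) * disc" 1] by fastforce
qed

lemma markov_value_diff_vanishes_at_0_1:
  assumes c: "experiment_kernel Es c" and c': "experiment_kernel Es c'"
    and b: "b \<in> {0, 1}" and "kernel_dist Es c c' b = 0"
  shows "V c n b = V c' n b"
proof (induction n)
  case (Suc n)
  have "post_sum Es X Q (\<lambda>y. \<bar>V c n y - V c' n y\<bar>) b = 0"
    using b Suc.IH by (intro post_mean_vanishes_at_0_1) auto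
  then show ?case
    using markov_value_diff_Suc_le[OF c c', of b n] b \<open>kernel_dist Es c c' b = 0\<close> by auto
qed simp

lemma nn_integral_markov_value_diff_Suc_le:
  assumes c: "experiment_kernel Es c" "\<And>E. (\<lambda>d. c d E) \<in> borel_measurable borel"
    and c': "experiment_kernel Es c'" "\<And>E. (\<lambda>d. c' d E) \<in> borel_measurable borel"
    and boundary: "kernel_dist Es c c' 0 = 0" "kernel_dist Es c c' 1 = 0"
  shows "(\<integral>\<^sup>+d\<in>{0..1}. ennreal \<bar>V c (Suc n) d - V c' (Suc n) d\<bar> \<partial>lborel)
    \<le> ennreal Gmax * (\<integral>\<^sup>+d\<in>{0..1}. ennreal (kernel_dist Es c c' d) \<partial>lborel)
      + ennreal transition_bound * (\<integral>\<^sup>+d\<in>{0..1}. ennreal \<bar>V c n d - V c' n d\<bar> \<partial>lborel)"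
proof -
  let ?D = "\<lambda>y. \<bar>V c n y - V c' n y\<bar>"
  note [measurable] = markov_value_measurable[OF c(2)] markov_value_measurable[OF c'(2)]
    kernel_dist_measurable[OF c(2) c'(2)]
  have D_measurable [measurable]: "?D \<in> borel_measurable borel" by measurable
  note [measurable] = post_mean_measurable[OF D_measurable, of "\<lambda>_ _. 1"]
  have "(\<integral>\<^sup>+d\<in>{0..1}. ennreal \<bar>V c (Suc n) d - V c' (Suc n) d\<bar> \<partial>lborel)
      \<le> (\<integral>\<^sup>+d\<in>{0..1}. (ennreal Gmax * ennreal (kernel_dist Es c c' d) + ennreal (post_sum Es X Q ?D d)) \<partial>lborel)"
  proof (intro nn_integral_mono)
    fix d :: real
    have "ennreal \<bar>V c (Suc n) d - V c' (Suc n) d\<bar>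
        \<le> ennreal Gmax * ennreal (kernel_dist Es c c' d) + ennreal (post_sum Es X Q ?D d)"
      if "d \<in> {0..1}"
      using ennreal_leI[OF markov_value_diff_Suc_le[OF c(1) c'(1) that, of n]] post_sum_nonneg[OF _ that, of ?D]
        mult_nonneg_nonneg[OF Gmax_nonneg kernel_dist_nonneg]
      by (simp add: ennreal_plus ennreal_mult Gmax_nonneg kernel_dist_nonneg)
    then show "ennreal \<bar>V c (Suc n) d - V c' (Suc n) d\<bar> * indicator {0..1} d
        \<le> (ennreal Gmax * ennreal (kernel_dist Es c c' d) + ennreal (post_sum Es X Q ?D d)) * indicator {0..1} d"
      by (simp split: split_indicator)
  qed
  also have "\<dots> = ennreal Gmax * (\<integral>\<^sup>+d\<in>{0..1}. ennreal (kernel_dist Es c c' d) \<partial>lborel)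
      + (\<integral>\<^sup>+d\<in>{0..1}. ennreal (post_sum Es X Q ?D d) \<partial>lborel)"
    by (subst nn_set_integral_add) (auto simp: nn_integral_cmult[symmetric] mult.assoc)
  also have "\<dots> \<le> ennreal Gmax * (\<integral>\<^sup>+d\<in>{0..1}. ennreal (kernel_dist Es c c' d) \<partial>lborel)
      + ennreal transition_bound * (\<integral>\<^sup>+d\<in>{0..1}. ennreal (?D d) \<partial>lborel)"
    using markov_value_diff_vanishes_at_0_1[OF c(1) c'(1)] boundary
    by (intro add_left_mono nn_integral_post_sum_le[OF D_measurable]) auto
  finally show ?thesis .
qed

lemma nn_integral_markov_value_diff_le:
  assumes c: "experiment_kernel Es c" "\<And>E. (\<lambda>d. c d E) \<in> borel_measurable borel"
    and c': "experiment_kernel Es c'" "\<And>E. (\<lambda>d. c' d E) \<in> borel_measurable borel"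
    and boundary: "kernel_dist Es c c' 0 = 0" "kernel_dist Es c c' 1 = 0"
  shows "(\<integral>\<^sup>+d\<in>{0..1}. ennreal \<bar>V c n d - V c' n d\<bar> \<partial>lborel)
    \<le> ennreal Gmax * (\<integral>\<^sup>+d\<in>{0..1}. ennreal (kernel_dist Es c c' d) \<partial>lborel)
       * ennreal (\<Sum>k<n. transition_bound ^ k)"
proof (induction n)
  case (Suc n)
  let ?e = "ennreal Gmax * (\<integral>\<^sup>+d\<in>{0..1}. ennreal (kernel_dist Es c c' d) \<partial>lborel)"
  have "(\<Sum>k<Suc n. transition_bound ^ k) = 1 + transition_bound * (\<Sum>k<n. transition_bound ^ k)"
    by (simp only: sum.lessThan_Suc_shift power_0 power_Suc sum_distrib_left)
  then have geometric: "ennreal (\<Sum>k<Suc n. transition_bound ^ k)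
      = 1 + ennreal transition_bound * ennreal (\<Sum>k<n. transition_bound ^ k)"
    using transition_bound_nonneg by (simp add: ennreal_plus ennreal_mult sum_nonneg)
  have "(\<integral>\<^sup>+d\<in>{0..1}. ennreal \<bar>V c (Suc n) d - V c' (Suc n) d\<bar> \<partial>lborel)
      \<le> ?e + ennreal transition_bound * (\<integral>\<^sup>+d\<in>{0..1}. ennreal \<bar>V c n d - V c' n d\<bar> \<partial>lborel)"
    by (rule nn_integral_markov_value_diff_Suc_le[OF c c' boundary])
  also have "\<dots> \<le> ?e + ennreal transition_bound * (?e * ennreal (\<Sum>k<n. transition_bound ^ k))"
    using Suc.IH by (intro add_left_mono mult_left_mono) simp_all
  also have "\<dots> = ?e * ennreal (\<Sum>k<Suc n. transition_bound ^ k)"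
    unfolding geometric by (simp add: distrib_left mult_ac)
  finally show ?case .
qed simp

lemma lim_markov_value_diff_set_integrable:
  assumes c: "experiment_kernel Es c" "\<And>E. (\<lambda>d. c d E) \<in> borel_measurable borel"
    and c': "experiment_kernel Es c'" "\<And>E. (\<lambda>d. c' d E) \<in> borel_measurable borel"
  shows "set_integrable lborel {0..1} (\<lambda>d. lim (\<lambda>n. V c n d) - lim (\<lambda>n. V c' n d))"
proof (rule set_integrable_bound[where f = "\<lambda>_. 2 * Gmax"])
  show "set_integrable lborel {0..1::real} (\<lambda>_. 2 * Gmax)"
    by (simp add: set_integrable_def)
  note [measurable] = markov_value_measurable[OF c(2)] markov_value_measurable[OF c'(2)]
  show "set_borel_measurable lborel {0..1} (\<lambda>d. lim (\<lambda>n. V c n d) - lim (\<lambda>n. V c' n d))"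
    unfolding set_borel_measurable_def by measurable
  show "AE d in lborel. d \<in> {0..1} \<longrightarrow>
      norm (lim (\<lambda>n. V c n d) - lim (\<lambda>n. V c' n d)) \<le> norm (2 * Gmax)"
  proof (intro AE_I2 impI)
    fix d :: real assume "d \<in> {0..1}"
    then have "\<bar>lim (\<lambda>n. V c n d)\<bar> \<le> Gmax" "\<bar>lim (\<lambda>n. V c' n d)\<bar> \<le> Gmax"
      using abs_lim_markov_value_le c(1) c'(1) by auto
    then show "norm (lim (\<lambda>n. V c n d) - lim (\<lambda>n. V c' n d)) \<le> norm (2 * Gmax)"
      using abs_triangle_ineq4[of "lim (\<lambda>n. V c n d)" "lim (\<lambda>n. V c' n d)"] Gmax_nonneg by simp
  qed
qed

lemma nn_integral_lim_markov_value_diff_le: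
  assumes c: "experiment_kernel Es c" "\<And>E. (\<lambda>d. c d E) \<in> borel_measurable borel"
    and c': "experiment_kernel Es c'" "\<And>E. (\<lambda>d. c' d E) \<in> borel_measurable borel"
    and boundary: "kernel_dist Es c c' 0 = 0" "kernel_dist Es c c' 1 = 0"
  shows "(\<integral>\<^sup>+d\<in>{0..1}. ennreal \<bar>lim (\<lambda>n. V c n d) - lim (\<lambda>n. V c' n d)\<bar> \<partial>lborel)
    \<le> ennreal (2 * tail_bound N) + ennreal Gmax * (\<integral>\<^sup>+d\<in>{0..1}. ennreal (kernel_dist Es c c' d) \<partial>lborel)
       * ennreal (\<Sum>k<N. transition_bound ^ k)"
proof -
  note [measurable] = markov_value_measurable[OF c(2)] markov_value_measurable[OF c'(2)]
  have bound: "\<bar>lim (\<lambda>n. V c n d) - lim (\<lambda>n. V c' n d)\<bar> \<le> 2 * tail_bound N + \<bar>V c N d - V c' N d\<bar>"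
    if "d \<in> {0..1}" for d
    using markov_value_convergent(2)[OF c(1) that, of N] markov_value_convergent(2)[OF c'(1) that, of N]
    by linarith
  have "ennreal \<bar>lim (\<lambda>n. V c n d) - lim (\<lambda>n. V c' n d)\<bar> * indicator {0..1} d
      \<le> (ennreal (2 * tail_bound N) + ennreal \<bar>V c N d - V c' N d\<bar>) * indicator {0..1} d" for d
  proof (cases "d \<in> {0..1}")
    case True
    have "ennreal \<bar>lim (\<lambda>n. V c n d) - lim (\<lambda>n. V c' n d)\<bar> \<le> ennreal (2 * tail_bound N + \<bar>V c N d - V c' N d\<bar>)"
      using bound[OF True] by (rule ennreal_leI)
    also have "\<dots> = ennreal (2 * tail_bound N) + ennreal \<bar>V c N d - V c' N d\<bar>"
      using tail_bound_nonneg by (simp add: ennreal_plus)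
    finally show ?thesis using True by simp
  qed simp
  then have "(\<integral>\<^sup>+d\<in>{0..1}. ennreal \<bar>lim (\<lambda>n. V c n d) - lim (\<lambda>n. V c' n d)\<bar> \<partial>lborel)
      \<le> (\<integral>\<^sup>+d\<in>{0..1}. (ennreal (2 * tail_bound N) + ennreal \<bar>V c N d - V c' N d\<bar>) \<partial>lborel)"
    by (rule nn_integral_mono)
  also have "\<dots> = ennreal (2 * tail_bound N) + (\<integral>\<^sup>+d\<in>{0..1}. ennreal \<bar>V c N d - V c' N d\<bar> \<partial>lborel)"
  proof -
    have "(\<lambda>d. ennreal (2 * tail_bound N)) \<in> borel_measurable lborel"
      and "(\<lambda>d. ennreal \<bar>V c N d - V c' N d\<bar>) \<in> borel_measurable lborel"
      and "{0..1::real} \<in> sets lborel"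
      by measurable
    then show ?thesis by (simp add: nn_set_integral_add nn_integral_cmult_indicator)
  qed
  also have "\<dots> \<le> ennreal (2 * tail_bound N) + ennreal Gmax * (\<integral>\<^sup>+d\<in>{0..1}. ennreal (kernel_dist Es c c' d) \<partial>lborel)
       * ennreal (\<Sum>k<N. transition_bound ^ k)"
    by (intro add_left_mono nn_integral_markov_value_diff_le[OF c c' boundary])
  finally show ?thesis .
qed

lemma lim_markov_value_L1_continuous:
  assumes c: "experiment_kernel Es c" "\<And>E. (\<lambda>d. c d E) \<in> borel_measurable borel" and "0 < \<epsilon>"
  obtains \<eta> where "0 < \<eta>"
    and "\<And>c'. experiment_kernel Es c' \<Longrightarrow> (\<And>E. (\<lambda>d. c' d E) \<in> borel_measurable borel) \<Longrightarrow>
      kernel_dist Es c c' 0 = 0 \<Longrightarrow> kernel_dist Es c c' 1 = 0 \<Longrightarrow>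
      (\<integral>\<^sup>+d\<in>{0..1}. ennreal (kernel_dist Es c c' d) \<partial>lborel) \<le> ennreal \<eta> \<Longrightarrow>
      (LINT d:{0..1}|lborel. \<bar>lim (\<lambda>n. V c n d) - lim (\<lambda>n. V c' n d)\<bar>) < \<epsilon>"
proof -
  have "(\<lambda>N. 2 * tail_bound N) \<longlonglongrightarrow> 2 * 0"
    by (intro tendsto_mult tendsto_const tail_bound_tendsto_0)
  then have "\<forall>\<^sub>F N in sequentially. 2 * tail_bound N < \<epsilon> / 2"
    by (rule order_tendstoD(2)) (use \<open>0 < \<epsilon>\<close> in simp)
  then obtain N where N: "2 * tail_bound N < \<epsilon> / 2"
    by (auto simp: eventually_sequentially)
  define S where "S = (\<Sum>k<N. transition_bound ^ k)"
  have "0 \<le> S" unfolding S_def using transition_bound_nonneg by (simp add: sum_nonneg)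
  define \<eta> where "\<eta> = \<epsilon> / (2 * (Gmax * S + 1))"
  have pos: "0 < Gmax * S + 1" using Gmax_nonneg \<open>0 \<le> S\<close> by (simp add: add_nonneg_pos)
  then have "0 < \<eta>" using \<open>0 < \<epsilon>\<close> by (simp add: \<eta>_def)
  have "Gmax * \<eta> * S < \<epsilon> / 2"
    using pos \<open>0 < \<epsilon>\<close> by (simp add: \<eta>_def field_simps)
  show ?thesis
  proof (rule that[OF \<open>0 < \<eta>\<close>])
    fix c' assume c': "experiment_kernel Es c'" "\<And>E. (\<lambda>d. c' d E) \<in> borel_measurable borel"
      and boundary: "kernel_dist Es c c' 0 = 0" "kernel_dist Es c c' 1 = 0"
      and close: "(\<integral>\<^sup>+d\<in>{0..1}. ennreal (kernel_dist Es c c' d) \<partial>lborel) \<le> ennreal \<eta>"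
    have "ennreal (LINT d:{0..1}|lborel. \<bar>lim (\<lambda>n. V c n d) - lim (\<lambda>n. V c' n d)\<bar>)
        = (\<integral>\<^sup>+d\<in>{0..1}. ennreal \<bar>lim (\<lambda>n. V c n d) - lim (\<lambda>n. V c' n d)\<bar> \<partial>lborel)"
      by (rule ennreal_set_integral_abs[OF lim_markov_value_diff_set_integrable[OF c c']])
    also have "\<dots> \<le> ennreal (2 * tail_bound N) + ennreal Gmax * ennreal \<eta> * ennreal S"
    proof -
      have "ennreal Gmax * (\<integral>\<^sup>+d\<in>{0..1}. ennreal (kernel_dist Es c c' d) \<partial>lborel) * ennreal S
          \<le> ennreal Gmax * ennreal \<eta> * ennreal S"
        using close by (intro mult_right_mono mult_left_mono) auto
      then show ?thesis
        using nn_integral_lim_markov_value_diff_le[OF c c' boundary, of N] unfolding S_def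
        by (meson add_left_mono order.trans)
    qed
    also have "\<dots> = ennreal (2 * tail_bound N + Gmax * \<eta> * S)"
      using tail_bound_nonneg[of N] Gmax_nonneg \<open>0 < \<eta>\<close> \<open>0 \<le> S\<close>
      by (simp add: ennreal_mult ennreal_plus)
    also have "\<dots> < ennreal \<epsilon>"
      using N \<open>Gmax * \<eta> * S < \<epsilon> / 2\<close> \<open>0 < \<epsilon>\<close> by (intro ennreal_lessI) auto
    finally show "(LINT d:{0..1}|lborel. \<bar>lim (\<lambda>n. V c n d) - lim (\<lambda>n. V c' n d)\<bar>) < \<epsilon>"
      using \<open>0 < \<epsilon>\<close> ennreal_less_iff
      by (cases "0 \<le> (LINT d:{0..1}|lborel. \<bar>lim (\<lambda>n. V c n d) - lim (\<lambda>n. V c' n d)\<bar>)") auto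
  qed
qed

lemma continuous_kernel_L1_close:
  assumes p: "\<And>d. d \<in> {0..1} \<Longrightarrow> p d \<in> Es" and level_sets: "\<And>E. {d \<in> {0..1}. p d = E} \<in> sets borel"
    and "0 < \<epsilon>"
  obtains c where "experiment_kernel Es c" and "\<And>E. continuous_on UNIV (\<lambda>d. c d E)"
    and "set_integrable lborel {0..1} (\<lambda>d. lim (\<lambda>n. V (det_kernel p) n d) - lim (\<lambda>n. V c n d))"
    and "(LINT d:{0..1}|lborel. \<bar>lim (\<lambda>n. V (det_kernel p) n d) - lim (\<lambda>n. V c n d)\<bar>) < \<epsilon>"
proof -
  have det: "experiment_kernel Es (det_kernel p)" "\<And>E. (\<lambda>d. det_kernel p d E) \<in> borel_measurable borel"
    using experiment_kernel_det_kernel[OF finite_Es p] det_kernel_measurable[OF level_sets] by auto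
  obtain \<eta> where "0 < \<eta>" and close: "\<And>c. experiment_kernel Es c \<Longrightarrow> (\<And>E. (\<lambda>d. c d E) \<in> borel_measurable borel) \<Longrightarrow>
      kernel_dist Es (det_kernel p) c 0 = 0 \<Longrightarrow> kernel_dist Es (det_kernel p) c 1 = 0 \<Longrightarrow>
      (\<integral>\<^sup>+d\<in>{0..1}. ennreal (kernel_dist Es (det_kernel p) c d) \<partial>lborel) \<le> ennreal \<eta> \<Longrightarrow>
      (LINT d:{0..1}|lborel. \<bar>lim (\<lambda>n. V (det_kernel p) n d) - lim (\<lambda>n. V c n d)\<bar>) < \<epsilon>"
    using lim_markov_value_L1_continuous[OF det \<open>0 < \<epsilon>\<close>] by blast
  obtain c where c: "experiment_kernel Es c" "\<And>E. continuous_on UNIV (\<lambda>d. c d E)"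
    "kernel_dist Es (det_kernel p) c 0 = 0" "kernel_dist Es (det_kernel p) c 1 = 0"
    "(\<integral>\<^sup>+d\<in>{0..1}. ennreal (kernel_dist Es (det_kernel p) c d) \<partial>lborel) \<le> ennreal \<eta>"
    using continuous_kernel_approx[OF p level_sets \<open>0 < \<eta>\<close>] by blast
  have c_measurable: "(\<lambda>d. c d E) \<in> borel_measurable borel" for E
    using c(2) by (rule borel_measurable_continuous_onI)
  show ?thesis
    using that[OF c(1,2) lim_markov_value_diff_set_integrable[OF det c(1) c_measurable]]
      close[OF c(1) c_measurable c(3-5)] .
qed

end

theorem proposition3:
  fixes A :: "'a set" and R :: "'a \<Rightarrow> theta \<Rightarrow> real"
    and Es :: "'e set" and X :: "'e \<Rightarrow> 'x set" and Q :: "'x \<Rightarrow> 'e \<Rightarrow> theta \<Rightarrow> real"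
    and Lam r :: real and p :: "real \<Rightarrow> 'e" and I :: "real set" and \<epsilon> :: real
  assumes "model_ok A Es X Q Lam r"
    and "det_markov_policy Es p I"
    and "\<forall>d\<in>{0..1}. det_payoff A R Es X Q Lam r p I d = optval A R Es X Q Lam r d"
    and "\<epsilon> > 0"
  shows "\<exists>pc Ic. cont_rand_markov_policy Es pc Ic \<and>
           set_integrable lborel {0..1::real}
             (\<lambda>d. optval A R Es X Q Lam r d - rand_payoff A R Es X Q Lam r pc Ic d) \<and>
           (LINT d:{0..1}|lborel. \<bar>optval A R Es X Q Lam r d - rand_payoff A R Es X Q Lam r pc Ic d\<bar>) < \<epsilon>"
proof -
  have p: "\<And>d. d \<in> {0..1} \<Longrightarrow> p d \<in> Es" and I: "I \<in> sets borel" "I \<subseteq> {0..1}"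
    using assms(2) by (auto simp: det_markov_policy_def)
  interpret bayes_stopping A R Es X Q Lam r "indicator I"
    using assms(1) I(1) by unfold_locales (auto split: split_indicator)
  obtain c where c: "experiment_kernel Es c" "\<And>E. continuous_on UNIV (\<lambda>d. c d E)"
    and integrable: "set_integrable lborel {0..1} (\<lambda>d. lim (\<lambda>n. V (det_kernel p) n d) - lim (\<lambda>n. V c n d))"
    and close: "(LINT d:{0..1}|lborel. \<bar>lim (\<lambda>n. V (det_kernel p) n d) - lim (\<lambda>n. V c n d)\<bar>) < \<epsilon>"
    using continuous_kernel_L1_close[OF p det_markov_policy_level_sets[OF assms(2)] assms(4)] by blast
  have payoffs: "optval A R Es X Q Lam r d - rand_payoff A R Es X Q Lam r c I d
      = lim (\<lambda>n. V (det_kernel p) n d) - lim (\<lambda>n. V c n d)" if "d \<in> {0..1}" for d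
    using that by (simp add: assms(3)[rule_format, OF that, symmetric] det_payoff_def rand_payoff_def
        payoff_eq_lim_markov_value markov_value_det_kernel)
  have "cont_rand_markov_policy Es c I"
    using c(1) continuous_on_subset[OF c(2)] I by (auto simp: cont_rand_markov_policy_def experiment_kernel_def)
  moreover have "set_integrable lborel {0..1::real}
      (\<lambda>d. optval A R Es X Q Lam r d - rand_payoff A R Es X Q Lam r c I d)"
    using integrable by (subst set_integrable_cong[OF refl refl payoffs])
  moreover have "(LINT d:{0..1}|lborel. \<bar>optval A R Es X Q Lam r d - rand_payoff A R Es X Q Lam r c I d\<bar>) < \<epsilon>"
    using close payoffs
    by (subst set_lebesgue_integral_cong[where g = "\<lambda>d. \<bar>lim (\<lambda>n. V (det_kernel p) n d) - lim (\<lambda>n. V c n d)\<bar>"]) auto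
  ultimately show ?thesis by blast
qed

end
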